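(* Let $H(X,Y,q)$ be the mirror curve polynomial described in the context, with Newton polygon $P$. There is $\epsilon>0$ such that for every $q\in(\mathbb{C}^* )^p$ with $|q_k|<\epsilon$ for all $k$, the (injective) map sending a connected component of $\mathbb{R}^2\setminus A_H$ to its order is surjective onto $P\cap\mathbb{Z}^2$; i.e. every lattice point of $P$ is the order of some connected component of $\mathbb{R}^2\setminus A_H$.
   Context: Let $P\subset\mathbb{R}^2$ be a convex lattice polygon with a unimodular triangulation $T_\Sigma$ (triangles with lattice vertices and area $1/2$; vertex set $P\cap\mathbb{Z}^2$), encoding a smooth toric Calabi–Yau 3-fold. Write $P\cap\mathbb{Z}^2=\{b_1,\dots,b_{p+3}\}$, $b_i=(m_i,n_i)$, with $b_1=(1,0)$, $b_2=(0,1)$, $b_3=(0,0)$ and $\sigma_1=\{b_1,b_2,b_3\}$ a triangle of $T_\Sigma$. Let $L=\ker(\mathbb{Z}^{p+3}\to\mathbb{Z}^3,\ e_i\mapsto(m_i,n_i,1))$, $D_i\in L^\vee$ the restriction of the $i$-th coordinate functional; for a triangle $\sigma$ with vertex index set $I'_\sigma$, $\{D_j:j\notin I'_\sigma\}$ is a basis of $L^\vee\otimes\mathbb{Q}$. Fix $H_1,\dots,H_p\in L^\vee\otimes\mathbb{Q}$ with $H_k=\sum_{j\notin I'_\sigma}s^\sigma_{k,j}D_j$, $s^\sigma_{k,j}\in\mathbb{Z}_{\ge0}$, $(s^\sigma_{k,j})$ nondegenerate, for every triangle $\sigma$. Set $a_i(q)=1$ ($i=1,2,3$), $a_i(q)=\prod_k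 q_k^{s^{\sigma_1}_{k,i}}$ ($i\ge4$), and $H(X,Y,q)=\sum_{i=1}^{p+3}a_i(q)X^{m_i}Y^{n_i}$. The amoeba of $H$ is $A_H=\mathrm{Log}(\{H=0\})\subset\mathbb{R}^2$, $\mathrm{Log}(x,y)=(\log|x|,\log|y|)$. For $w\in\mathbb{R}^2\setminus A_H$ its order is $v(w)\in\mathbb{Z}^2$, $v_j(w)=\frac{1}{(2\pi i)^2}\int_{\mathrm{Log}^{-1}(w)}\frac{z_j\partial_{z_j}H}{H}\frac{dz_1}{z_1}\wedge\frac{dz_2}{z_2}$ (with $z=(X,Y)$); it is constant on connected components of $\mathbb{R}^2\setminus A_H$, lies in $P$, and distinct components have distinct orders. *)

theory Defs
  imports "HOL-Analysis.Analysis"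
begin

definition lpt :: "(nat \<Rightarrow> int) \<Rightarrow> (nat \<Rightarrow> int) \<Rightarrow> nat \<Rightarrow> real \<times> real" where
  "lpt m n i = (real_of_int (m i), real_of_int (n i))"

definition unimodular_triangle :: "(nat \<Rightarrow> int) \<Rightarrow> (nat \<Rightarrow> int) \<Rightarrow> nat set \<Rightarrow> bool" where
  "unimodular_triangle m n \<sigma> \<longleftrightarrow>
     (\<exists>i j k. \<sigma> = {i, j, k} \<and> i \<noteq> j \<and> i \<noteq> k \<and> j \<noteq> k \<and>
        \<bar>(m j - m i) * (n k - n i) - (m k - m i) * (n j - n i)\<bar> = 1)"

definition unimodular_triangulation ::
  "(nat \<Rightarrow> int) \<Rightarrow> (nat \<Rightarrow> int) \<Rightarrow> nat set \<Rightarrow> nat set set \<Rightarrow> bool" where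
  "unimodular_triangulation m n V T \<longleftrightarrow>
     finite T \<and>
     (\<forall>\<sigma>\<in>T. \<sigma> \<subseteq> V \<and> unimodular_triangle m n \<sigma>) \<and>
     \<Union>T = V \<and>
     (\<Union>\<sigma>\<in>T. convex hull (lpt m n ` \<sigma>)) = convex hull (lpt m n ` V) \<and>
     (\<forall>\<sigma>\<in>T. \<forall>\<tau>\<in>T. convex hull (lpt m n ` \<sigma>) \<inter> convex hull (lpt m n ` \<tau>)
                      = convex hull (lpt m n ` (\<sigma> \<inter> \<tau>)))"

text \<open>The lattice L = ker(Z^N -> Z^3, e_i |-> (m_i, n_i, 1)), vectors indexed by {1..N}.\<close>
definition lattice_L :: "(nat \<Rightarrow> int) \<Rightarrow> (nat \<Rightarrow> int) \<Rightarrow> nat \<Rightarrow> (nat \<Rightarrow> int) set" where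
  "lattice_L m n N = {l. (\<forall>i. i \<notin> {1..N} \<longrightarrow> l i = 0) \<and>
                        (\<Sum>i=1..N. l i * m i) = 0 \<and> (\<Sum>i=1..N. l i * n i) = 0 \<and>
                        (\<Sum>i=1..N. l i) = 0}"

definition det_sq :: "nat \<Rightarrow> (nat \<Rightarrow> nat \<Rightarrow> rat) \<Rightarrow> rat" where
  "det_sq d M = (\<Sum>\<pi> | \<pi> permutes {0..<d}. of_int (sign \<pi>) * (\<Prod>i<d. M i (\<pi> i)))"

text \<open>The p x p matrix (s^sigma_{k,j}), rows k = 1..p, columns j in {1..p+3} - sigma
  (listed in increasing order).\<close>
definition s_matrix :: "nat \<Rightarrow> (nat set \<Rightarrow> nat \<Rightarrow> nat \<Rightarrow> nat) \<Rightarrow> nat set \<Rightarrow> nat \<Rightarrow> nat \<Rightarrow> rat" where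
  "s_matrix p s \<sigma> r c = of_nat (s \<sigma> (r + 1) (sorted_list_of_set ({1..p+3} - \<sigma>) ! c))"

definition amoeba :: "(complex \<Rightarrow> complex \<Rightarrow> complex) \<Rightarrow> (real \<times> real) set" where
  "amoeba F = {(ln (cmod x), ln (cmod y)) | x y. x \<noteq> 0 \<and> y \<noteq> 0 \<and> F x y = 0}"

text \<open>Order of w: v_j(w) = (2 pi i)^(-2) \<integral>_{Log^{-1}(w)} z_j d_{z_j}F / F dz1/z1 dz2/z2.
  Parametrising Log^{-1}(w) by z_j = exp(w_j + i t_j), t in [0,2pi]^2, gives
  dz_j/z_j = i dt_j, so v_j(w) = (4 pi^2)^(-1) \<integral>\<integral> z_j d_{z_j}F / F dt1 dt2.\<close>
definition order :: "(complex \<Rightarrow> complex \<Rightarrow> complex) \<Rightarrow> real \<times> real \<Rightarrow> complex \<times> complex" where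
  "order F w =
    (let X = (\<lambda>t::real. exp (complex_of_real (fst w) + \<i> * complex_of_real t));
         Y = (\<lambda>t::real. exp (complex_of_real (snd w) + \<i> * complex_of_real t))
     in ( integral ({0..2*pi} \<times> {0..2*pi})
            (\<lambda>(t1, t2). X t1 * deriv (\<lambda>x. F x (Y t2)) (X t1) / F (X t1) (Y t2))
            / complex_of_real (4 * pi\<^sup>2),
          integral ({0..2*pi} \<times> {0..2*pi})
            (\<lambda>(t1, t2). Y t2 * deriv (\<lambda>y. F (X t1) y) (Y t2) / F (X t1) (Y t2))
            / complex_of_real (4 * pi\<^sup>2)))"

definition mirror_H :: "nat \<Rightarrow> (nat \<Rightarrow> int) \<Rightarrow> (nat \<Rightarrow> int) \<Rightarrow> (nat \<Rightarrow> nat \<Rightarrow> nat)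
                        \<Rightarrow> (nat \<Rightarrow> complex) \<Rightarrow> complex \<Rightarrow> complex \<Rightarrow> complex" where
  "mirror_H p m n s1 q X Y =
     (\<Sum>i=1..p+3. (if i \<le> 3 then 1 else (\<Prod>k=1..p. q k ^ s1 k i)) * X powi m i * Y powi n i)"

end

theory Submission
  imports Defs
begin

text \<open>
  Put t_k = - ln |q_k|. The i-th coefficient of H then has modulus exp (- h i), where the
  height h is linear in t. Evaluating the functional H_k on the lattice relation expressing a point
  b_j through the vertices of a triangle {i, a, b} of the triangulation, once in the chamber
  {1, 2, 3} and once in the chamber {i, a, b}, shows that the bending of h across that triangle
  is \<Sum>_k t_k s^{i,a,b}_kj, which by nondegeneracy is at least min t_k. So for small q the height is
  strongly convex, and for every lattice point b_i there is a w at which the affine function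
  interpolating h on a triangle at b_i lies below h at all other points by ln (p + 3). At such a
  w the i-th monomial dominates the sum of all others on the torus Log^-1(w), so w is outside
  the amoeba, and the argument principle, applied to each variable separately, gives order b_i.
\<close>

section \<open>The order of a point where one monomial dominates\<close>

definition circle_exp :: "real \<Rightarrow> real \<Rightarrow> complex" where
  "circle_exp r t = exp (complex_of_real r + \<i> * complex_of_real t)"

lemma norm_circle_exp [simp]: "cmod (circle_exp r t) = exp r"
  by (simp add: circle_exp_def)

lemma circle_exp_nonzero [simp]: "circle_exp r t \<noteq> 0"
  by (simp add: circle_exp_def)

lemma circle_exp_2pi: "circle_exp r (2 * pi) = circle_exp r 0"
  by (simp add: circle_exp_def exp_add mult.commute)

lemma circle_exp_has_vector_derivative:
  "(circle_exp r has_vector_derivative (\<i> * circle_exp r t)) (at t)"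
proof -
  have "((\<lambda>z. exp (complex_of_real r + \<i> * z)) has_field_derivative \<i> * circle_exp r t) (at (of_real t))"
    unfolding circle_exp_def by (rule derivative_eq_intros | simp)+
  from has_vector_derivative_real_field[OF this] show ?thesis
    unfolding circle_exp_def .
qed

lemma continuous_on_circle_exp [continuous_intros]:
  "continuous_on S f \<Longrightarrow> continuous_on S (\<lambda>x. circle_exp r (f x))"
  unfolding circle_exp_def by (intro continuous_intros)

lemma circle_integral_logderiv_near_one:
  fixes u u' :: "complex \<Rightarrow> complex"
  assumes deriv: "\<And>x. cmod x = exp r \<Longrightarrow> (u has_field_derivative u' x) (at x)"
    and near_one: "\<And>x. cmod x = exp r \<Longrightarrow> cmod (u x - 1) < 1"
  shows "((\<lambda>t. circle_exp r t * u' (circle_exp r t) / u (circle_exp r t)) has_integral 0) {0..2*pi}"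
proof -
  have u_slit: "u x \<notin> \<real>\<^sub>\<le>\<^sub>0" if "cmod x = exp r" for x
  proof
    assume "u x \<in> \<real>\<^sub>\<le>\<^sub>0"
    then obtain a where "a \<le> 0" "u x = of_real a" by (auto simp: nonpos_Reals_def)
    then have "cmod (u x - 1) = \<bar>a - 1\<bar>"
      by (metis norm_of_real of_real_1 of_real_diff)
    then show False using near_one[OF that] \<open>a \<le> 0\<close> by linarith
  qed
  \<comment> \<open>the disc around 1 avoids the branch cut, so Ln \<circ> u is a primitive along the whole circle\<close>
  have "((\<lambda>t. Ln (u (circle_exp r t))) has_vector_derivative
          \<i> * circle_exp r t * (u' (circle_exp r t) * inverse (u (circle_exp r t)))) (at t)" for t
  proof -
    have "((\<lambda>x. Ln (u x)) has_field_derivative u' (circle_exp r t) * inverse (u (circle_exp r t))) (at (circle_exp r t))"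
      using DERIV_chain2[OF has_field_derivative_Ln[OF u_slit] deriv] by (simp add: mult.commute)
    from field_vector_diff_chain_at[OF circle_exp_has_vector_derivative this] show ?thesis
      by (simp add: o_def)
  qed
  from fundamental_theorem_of_calculus[of 0 "2*pi", OF _ this[THEN has_vector_derivative_at_within]]
  have "((\<lambda>t. \<i> * circle_exp r t * (u' (circle_exp r t) * inverse (u (circle_exp r t)))) has_integral 0) {0..2*pi}"
    by (simp add: circle_exp_2pi)
  from has_integral_mult_right[OF this, of "-\<i>"] show ?thesis
    by (simp add: field_simps)
qed

lemma circle_integral_logderiv_dominant_monomial:
  fixes f f' :: "complex \<Rightarrow> complex" and c :: complex and k :: int
  assumes deriv: "\<And>x. cmod x = exp r \<Longrightarrow> (f has_field_derivative f' x) (at x)"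
    and dominant: "\<And>x. cmod x = exp r \<Longrightarrow> cmod (f x - c * x powi k) < cmod (c * x powi k)"
  shows "((\<lambda>t. circle_exp r t * f' (circle_exp r t) / f (circle_exp r t))
           has_integral complex_of_real (2 * pi) * of_int k) {0..2*pi}"
proof -
  have c: "c \<noteq> 0" using dominant[of "exp r"] by auto
  define u where "u x = f x / (c * x powi k)" for x
  define u' where "u' x = f' x / (c * x powi k) - of_int k * f x / (c * x powi k * x)" for x
  have u_deriv: "(u has_field_derivative u' x) (at x)" if "cmod x = exp r" for x
  proof -
    have "x \<noteq> 0" using that by auto
    with deriv[OF that] c show ?thesis
      unfolding u_def u'_def
      by (auto intro!: derivative_eq_intros simp: power_int_diff field_simps power2_eq_square)
  qed
  have u_near_one: "cmod (u x - 1) < 1" if "cmod x = exp r" for x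
  proof -
    have "x \<noteq> 0" using that by auto
    then have "u x - 1 = (f x - c * x powi k) / (c * x powi k)"
      using c by (simp add: u_def field_simps)
    then show ?thesis using dominant[OF that] by (simp add: norm_divide divide_less_eq)
  qed
  have f_nonzero: "f x \<noteq> 0" if "cmod x = exp r" for x
    using u_near_one[OF that] by (auto simp: u_def)
  have logderiv: "x * f' x / f x = of_int k + x * u' x / u x" if "cmod x = exp r" for x
  proof -
    have "x \<noteq> 0" using that by auto
    then show ?thesis using c f_nonzero[OF that] by (simp add: u_def u'_def field_simps)
  qed
  have "((\<lambda>t. of_int k + circle_exp r t * u' (circle_exp r t) / u (circle_exp r t))
          has_integral complex_of_real (2 * pi) * of_int k + 0) {0..2*pi}"
    using has_integral_const_real[of "of_int k :: complex" 0 "2*pi"]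
      circle_integral_logderiv_near_one[OF u_deriv u_near_one]
    by (intro has_integral_add) (simp_all add: scaleR_conv_of_real)
  then show ?thesis by (simp add: logderiv)
qed

lemma integral_Times_const_slices_snd:
  fixes g :: "real \<Rightarrow> real \<Rightarrow> 'a::banach"
  assumes "a \<le> b" and cont: "continuous_on ({a..b} \<times> {c..d}) (\<lambda>(x, y). g x y)"
    and slices: "\<And>x. x \<in> {a..b} \<Longrightarrow> ((\<lambda>y. g x y) has_integral v) {c..d}"
  shows "integral ({a..b} \<times> {c..d}) (\<lambda>(x, y). g x y) = (b - a) *\<^sub>R v"
proof -
  have box: "{a..b} \<times> {c..d} = cbox (a, c) (b, d)"
    by (simp add: cbox_Pair_eq)
  have "integral ({a..b} \<times> {c..d}) (\<lambda>(x, y). g x y) = integral {a..b} (\<lambda>x. integral {c..d} (g x))"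
    using integral_prod_continuous[of a c b d "\<lambda>(x, y). g x y"] cont
    by (simp add: box cbox_interval)
  also have "\<dots> = integral {a..b} (\<lambda>x. v)"
    using slices by (intro integral_cong) (simp add: integral_unique)
  finally show ?thesis using \<open>a \<le> b\<close> by simp
qed

lemma integral_Times_const_slices_fst:
  fixes g :: "real \<Rightarrow> real \<Rightarrow> 'a::banach"
  assumes "c \<le> d" and cont: "continuous_on ({a..b} \<times> {c..d}) (\<lambda>(x, y). g x y)"
    and slices: "\<And>y. y \<in> {c..d} \<Longrightarrow> ((\<lambda>x. g x y) has_integral v) {a..b}"
  shows "integral ({a..b} \<times> {c..d}) (\<lambda>(x, y). g x y) = (d - c) *\<^sub>R v"
proof -
  have box: "{a..b} \<times> {c..d} = cbox (a, c) (b, d)"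
    by (simp add: cbox_Pair_eq)
  have "integral ({a..b} \<times> {c..d}) (\<lambda>(x, y). g x y) = integral {a..b} (\<lambda>x. integral {c..d} (g x))"
    using integral_prod_continuous[of a c b d "\<lambda>(x, y). g x y"] cont
    by (simp add: box cbox_interval)
  also have "\<dots> = integral {c..d} (\<lambda>y. integral {a..b} (\<lambda>x. g x y))"
    using integral_swap_continuous[of a c b d g] cont by (simp add: box cbox_interval)
  also have "\<dots> = integral {c..d} (\<lambda>y. v)"
    using slices by (intro integral_cong) (simp add: integral_unique)
  finally show ?thesis using \<open>c \<le> d\<close> by simp
qed

lemma order_circle_exp:
  "order F w =
    (integral ({0..2*pi} \<times> {0..2*pi}) (\<lambda>(t1, t2).
        circle_exp (fst w) t1 * deriv (\<lambda>x. F x (circle_exp (snd w) t2)) (circle_exp (fst w) t1)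
        / F (circle_exp (fst w) t1) (circle_exp (snd w) t2)) / complex_of_real (4 * pi\<^sup>2),
     integral ({0..2*pi} \<times> {0..2*pi}) (\<lambda>(t1, t2).
        circle_exp (snd w) t2 * deriv (\<lambda>y. F (circle_exp (fst w) t1) y) (circle_exp (snd w) t2)
        / F (circle_exp (fst w) t1) (circle_exp (snd w) t2)) / complex_of_real (4 * pi\<^sup>2))"
  by (simp add: order_def circle_exp_def)

lemma notin_amoeba_iff:
  "w \<notin> amoeba F \<longleftrightarrow> (\<forall>x y. cmod x = exp (fst w) \<longrightarrow> cmod y = exp (snd w) \<longrightarrow> F x y \<noteq> 0)"
proof -
  have "w \<in> amoeba F \<longleftrightarrow> (\<exists>x y. cmod x = exp (fst w) \<and> cmod y = exp (snd w) \<and> F x y = 0)"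
  proof
    assume "w \<in> amoeba F"
    then obtain x y where "x \<noteq> 0" "y \<noteq> 0" "F x y = 0" "w = (ln (cmod x), ln (cmod y))"
      by (auto simp: amoeba_def)
    then show "\<exists>x y. cmod x = exp (fst w) \<and> cmod y = exp (snd w) \<and> F x y = 0"
      by auto
  next
    assume "\<exists>x y. cmod x = exp (fst w) \<and> cmod y = exp (snd w) \<and> F x y = 0"
    then obtain x y where "cmod x = exp (fst w)" "cmod y = exp (snd w)" "F x y = 0"
      by blast
    then have "x \<noteq> 0" "y \<noteq> 0" "w = (ln (cmod x), ln (cmod y))"
      by auto
    with \<open>F x y = 0\<close> show "w \<in> amoeba F"
      by (auto simp: amoeba_def)
  qed
  then show ?thesis by blast
qed

lemma continuous_on_torus_circle_exp:
  fixes G :: "complex \<Rightarrow> complex \<Rightarrow> 'a::topological_space"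
  assumes "continuous_on ((- {0}) \<times> (- {0})) (\<lambda>(x, y). G x y)"
  shows "continuous_on (S \<times> S') (\<lambda>(a, b). G (circle_exp r a) (circle_exp r' b))"
proof -
  have param: "continuous_on (S \<times> S') (\<lambda>(a, b). (circle_exp r a, circle_exp r' b))"
    unfolding case_prod_beta by (intro continuous_intros)
  have "(\<lambda>(a, b). (circle_exp r a, circle_exp r' b)) ` (S \<times> S') \<subseteq> (- {0}) \<times> (- {0})"
    by auto
  from continuous_on_compose2[OF assms param this] show ?thesis
    by (simp add: case_prod_beta)
qed

lemma order_eq_dominant_monomial:
  fixes F Fx Fy :: "complex \<Rightarrow> complex \<Rightarrow> complex" and w :: "real \<times> real"
  assumes Fx: "\<And>x y. x \<noteq> 0 \<Longrightarrow> y \<noteq> 0 \<Longrightarrow> ((\<lambda>x. F x y) has_field_derivative Fx x y) (at x)"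
    and Fy: "\<And>x y. x \<noteq> 0 \<Longrightarrow> y \<noteq> 0 \<Longrightarrow> ((\<lambda>y. F x y) has_field_derivative Fy x y) (at y)"
    and cont: "continuous_on ((- {0}) \<times> (- {0})) (\<lambda>(x, y). F x y)"
      "continuous_on ((- {0}) \<times> (- {0})) (\<lambda>(x, y). Fx x y)"
      "continuous_on ((- {0}) \<times> (- {0})) (\<lambda>(x, y). Fy x y)"
    and dominant: "\<And>x y. cmod x = exp (fst w) \<Longrightarrow> cmod y = exp (snd w) \<Longrightarrow>
                     cmod (F x y - c * x powi k * y powi l) < cmod (c * x powi k * y powi l)"
  shows "order F w = (of_int k, of_int l)"
proof -
  define X where "X = circle_exp (fst w)"
  define Y where "Y = circle_exp (snd w)"
  have F_nonzero: "F (X a) (Y b) \<noteq> 0" for a b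
    using dominant[of "X a" "Y b"] by (auto simp: X_def Y_def)
  have torus_cont: "continuous_on ({0..2*pi} \<times> {0..2*pi}) (\<lambda>z. G (X (fst z)) (Y (snd z)))"
    if "continuous_on ((- {0}) \<times> (- {0})) (\<lambda>(x, y). G x y)" for G :: "complex \<Rightarrow> complex \<Rightarrow> complex"
    using continuous_on_torus_circle_exp[OF that] unfolding X_def Y_def case_prod_beta .
  have X_cont: "continuous_on ({0..2*pi} \<times> {0..2*pi}) (\<lambda>z. X (fst z))"
    and Y_cont: "continuous_on ({0..2*pi} \<times> {0..2*pi}) (\<lambda>z. Y (snd z))"
    unfolding X_def Y_def by (intro continuous_intros)+
  have cont1: "continuous_on ({0..2*pi} \<times> {0..2*pi}) (\<lambda>(a, b). X a * Fx (X a) (Y b) / F (X a) (Y b))"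
    unfolding case_prod_beta
    by (intro continuous_on_divide continuous_on_mult X_cont
        torus_cont[OF cont(2)] torus_cont[OF cont(1)])
      (use F_nonzero in auto)
  have cont2: "continuous_on ({0..2*pi} \<times> {0..2*pi}) (\<lambda>(a, b). Y b * Fy (X a) (Y b) / F (X a) (Y b))"
    unfolding case_prod_beta
    by (intro continuous_on_divide continuous_on_mult Y_cont
        torus_cont[OF cont(3)] torus_cont[OF cont(1)])
      (use F_nonzero in auto)
  have slice1: "((\<lambda>a. X a * Fx (X a) (Y b) / F (X a) (Y b))
                  has_integral complex_of_real (2 * pi) * of_int k) {0..2*pi}" for b
    unfolding X_def
  proof (rule circle_integral_logderiv_dominant_monomial[where c = "c * Y b powi l"])
    fix x :: complex assume x: "cmod x = exp (fst w)"
    then show "((\<lambda>x. F x (Y b)) has_field_derivative Fx x (Y b)) (at x)"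
      by (intro Fx) (auto simp: Y_def)
    show "cmod (F x (Y b) - c * Y b powi l * x powi k) < cmod (c * Y b powi l * x powi k)"
      using dominant[OF x, of "Y b"] by (simp add: Y_def ac_simps)
  qed
  have slice2: "((\<lambda>b. Y b * Fy (X a) (Y b) / F (X a) (Y b))
                  has_integral complex_of_real (2 * pi) * of_int l) {0..2*pi}" for a
    unfolding Y_def
  proof (rule circle_integral_logderiv_dominant_monomial[where c = "c * X a powi k"])
    fix y :: complex assume y: "cmod y = exp (snd w)"
    then show "((\<lambda>y. F (X a) y) has_field_derivative Fy (X a) y) (at y)"
      by (intro Fy) (auto simp: X_def)
    show "cmod (F (X a) y - c * X a powi k * y powi l) < cmod (c * X a powi k * y powi l)"
      using dominant[OF _ y, of "X a"] by (simp add: X_def ac_simps)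
  qed
  have "deriv (\<lambda>x. F x (Y b)) (X a) = Fx (X a) (Y b)" "deriv (\<lambda>y. F (X a) y) (Y b) = Fy (X a) (Y b)" for a b
    using Fx Fy by (auto simp: X_def Y_def intro: DERIV_imp_deriv)
  then show ?thesis
    unfolding order_circle_exp X_def[symmetric] Y_def[symmetric]
    by (simp add: integral_Times_const_slices_fst[OF _ cont1 slice1]
        integral_Times_const_slices_snd[OF _ cont2 slice2] scaleR_conv_of_real power2_eq_square)
qed

definition laurent_poly ::
  "nat set \<Rightarrow> (nat \<Rightarrow> complex) \<Rightarrow> (nat \<Rightarrow> int) \<Rightarrow> (nat \<Rightarrow> int) \<Rightarrow> complex \<Rightarrow> complex \<Rightarrow> complex"
  where "laurent_poly J c m n x y = (\<Sum>j\<in>J. c j * x powi m j * y powi n j)"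

definition dominant_term_at ::
  "nat set \<Rightarrow> (nat \<Rightarrow> complex) \<Rightarrow> (nat \<Rightarrow> int) \<Rightarrow> (nat \<Rightarrow> int) \<Rightarrow> nat \<Rightarrow> real \<times> real \<Rightarrow> bool"
  where "dominant_term_at J c m n i w \<longleftrightarrow>
    (\<Sum>j\<in>J - {i}. cmod (c j) * exp (of_int (m j) * fst w + of_int (n j) * snd w))
      < cmod (c i) * exp (of_int (m i) * fst w + of_int (n i) * snd w)"

lemma norm_monomial_on_torus:
  fixes x y :: complex
  assumes "cmod x = exp a" "cmod y = exp b"
  shows "cmod (c * x powi k * y powi l) = cmod c * exp (of_int k * a + of_int l * b)"
  using assms by (simp add: norm_mult norm_power_int exp_power_int exp_add)

lemma laurent_poly_dominant_on_torus:
  assumes "finite J" "i \<in> J"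
    and dominant: "dominant_term_at J c m n i w"
    and torus: "cmod x = exp (fst w)" "cmod y = exp (snd w)"
  shows "cmod (laurent_poly J c m n x y - c i * x powi m i * y powi n i)
           < cmod (c i * x powi m i * y powi n i)"
proof -
  have "cmod (laurent_poly J c m n x y - c i * x powi m i * y powi n i)
          = cmod (\<Sum>j\<in>J - {i}. c j * x powi m j * y powi n j)"
    using assms(1,2) by (simp add: laurent_poly_def sum_diff1)
  also have "\<dots> \<le> (\<Sum>j\<in>J - {i}. cmod (c j * x powi m j * y powi n j))"
    by (rule norm_sum)
  also have "\<dots> < cmod (c i * x powi m i * y powi n i)"
    using dominant by (simp add: dominant_term_at_def norm_monomial_on_torus[OF torus])
  finally show ?thesis .
qed

lemma laurent_poly_dominant_term:
  assumes "finite J" "i \<in> J"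
    and dominant: "dominant_term_at J c m n i w"
  shows "w \<notin> amoeba (laurent_poly J c m n)"
    and "order (laurent_poly J c m n) w = (of_int (m i), of_int (n i))"
proof -
  note torus_dominant = laurent_poly_dominant_on_torus[OF assms]
  show "w \<notin> amoeba (laurent_poly J c m n)"
  proof (unfold notin_amoeba_iff, intro allI impI notI)
    fix x y assume "cmod x = exp (fst w)" "cmod y = exp (snd w)" "laurent_poly J c m n x y = 0"
    with torus_dominant[of x y] show False by simp
  qed
  define Fx where "Fx x y = (\<Sum>j\<in>J. c j * (of_int (m j) * x powi (m j - 1)) * y powi n j)" for x y
  define Fy where "Fy x y = (\<Sum>j\<in>J. c j * x powi m j * (of_int (n j) * y powi (n j - 1)))" for x y
  show "order (laurent_poly J c m n) w = (of_int (m i), of_int (n i))"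
  proof (rule order_eq_dominant_monomial[OF _ _ _ _ _ torus_dominant])
    show "((\<lambda>x. laurent_poly J c m n x y) has_field_derivative Fx x y) (at x)" if "x \<noteq> 0" for x y
      unfolding laurent_poly_def Fx_def using that
      by (intro DERIV_sum) (rule derivative_eq_intros | simp)+
    show "((\<lambda>y. laurent_poly J c m n x y) has_field_derivative Fy x y) (at y)" if "y \<noteq> 0" for x y
      unfolding laurent_poly_def Fy_def using that
      by (intro DERIV_sum) (rule derivative_eq_intros | simp)+
    show "continuous_on ((- {0}) \<times> (- {0})) (\<lambda>(x, y). laurent_poly J c m n x y)"
      "continuous_on ((- {0}) \<times> (- {0})) (\<lambda>(x, y). Fx x y)"
      "continuous_on ((- {0}) \<times> (- {0})) (\<lambda>(x, y). Fy x y)"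
      unfolding laurent_poly_def Fx_def Fy_def case_prod_beta
      by (intro continuous_intros; auto)+
  qed
qed

lemma dominant_term_at_of_height_gap:
  fixes c :: "nat \<Rightarrow> complex" and h :: "nat \<Rightarrow> real"
  assumes "finite J" "i \<in> J"
    and norm_c: "\<And>j. j \<in> J \<Longrightarrow> cmod (c j) = exp (- h j)"
    and gap: "\<And>j. j \<in> J - {i} \<Longrightarrow>
                ln (card J) \<le> h j - h i - (of_int (m j - m i) * fst w + of_int (n j - n i) * snd w)"
  shows "dominant_term_at J c m n i w"
proof -
  define M where "M = cmod (c i) * exp (of_int (m i) * fst w + of_int (n i) * snd w)"
  have card_pos: "card J > 0" using assms(1,2) card_gt_0_iff by blast
  have "M > 0" using norm_c[OF assms(2)] by (simp add: M_def)
  have term_le: "cmod (c j) * exp (of_int (m j) * fst w + of_int (n j) * snd w) \<le> M / card J"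
    if j: "j \<in> J - {i}" for j
  proof -
    have "cmod (c j) * exp (of_int (m j) * fst w + of_int (n j) * snd w)
            = exp (- h j + of_int (m j) * fst w + of_int (n j) * snd w)"
      using j norm_c by (simp add: mult_exp_exp)
    also have "\<dots> \<le> exp (- h i + of_int (m i) * fst w + of_int (n i) * snd w - ln (card J))"
      using gap[OF j] by (simp add: algebra_simps)
    also have "\<dots> = M / card J"
      using norm_c[OF assms(2)] card_pos by (simp add: M_def exp_diff exp_add exp_minus field_simps)
    finally show ?thesis .
  qed
  have "(\<Sum>j\<in>J - {i}. cmod (c j) * exp (of_int (m j) * fst w + of_int (n j) * snd w))
          \<le> card (J - {i}) * (M / card J)"
    using sum_bounded_above[of "J - {i}", OF term_le] by simp
  also have "\<dots> < M"
    using \<open>M > 0\<close> card_pos assms(1,2) by (simp add: card_Diff_singleton field_simps)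
  finally show ?thesis unfolding dominant_term_at_def M_def .
qed

section \<open>Unimodular triangles and lattice relations\<close>

lemma unimodular_triangle_card: "unimodular_triangle m n \<sigma> \<Longrightarrow> card \<sigma> = 3"
  by (auto simp: unimodular_triangle_def)

lemma unimodular_triangle_at_vertex:
  assumes "unimodular_triangle m n \<sigma>" "i \<in> \<sigma>"
  obtains a b where "\<sigma> = {i, a, b}"
    "\<bar>(m a - m i) * (n b - n i) - (m b - m i) * (n a - n i)\<bar> = 1"
proof -
  obtain x y z where \<sigma>: "\<sigma> = {x, y, z}"
    and det: "\<bar>(m y - m x) * (n z - n x) - (m z - m x) * (n y - n x)\<bar> = 1"
    using assms(1) unfolding unimodular_triangle_def by blast
  \<comment> \<open>moving the base vertex of the determinant only changes its sign\<close>
  have "\<bar>(m x - m y) * (n z - n y) - (m z - m y) * (n x - n y)\<bar> = 1"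
    "\<bar>(m x - m z) * (n y - n z) - (m y - m z) * (n x - n z)\<bar> = 1"
    using det by (simp_all add: algebra_simps abs_minus_commute)
  moreover have "{x, y, z} = {y, x, z}" "{x, y, z} = {z, x, y}" by auto
  ultimately show thesis
    using that det assms(2) \<sigma> by auto
qed

lemma abs_det2_le:
  fixes a b c d :: "'a::linordered_idom"
  shows "\<bar>a * d - b * c\<bar> \<le> (\<bar>a\<bar> + \<bar>c\<bar>) * (\<bar>b\<bar> + \<bar>d\<bar>)"
proof -
  have "\<bar>a * d - b * c\<bar> \<le> \<bar>a\<bar> * \<bar>d\<bar> + \<bar>b\<bar> * \<bar>c\<bar>"
    using abs_triangle_ineq4[of "a * d" "b * c"] by (simp add: abs_mult)
  also have "\<dots> \<le> (\<bar>a\<bar> + \<bar>c\<bar>) * (\<bar>b\<bar> + \<bar>d\<bar>)"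
    by (simp add: algebra_simps)
  finally show ?thesis .
qed

lemma unimodular_coordinates:
  fixes u1 u2 v1 v2 x1 x2 :: int
  assumes "\<bar>u1 * v2 - v1 * u2\<bar> = 1"
  obtains la lb where "x1 = la * u1 + lb * v1" "x2 = la * u2 + lb * v2"
    "\<bar>la\<bar> \<le> (\<bar>x1\<bar> + \<bar>x2\<bar>) * (\<bar>v1\<bar> + \<bar>v2\<bar>)" "\<bar>lb\<bar> \<le> (\<bar>u1\<bar> + \<bar>u2\<bar>) * (\<bar>x1\<bar> + \<bar>x2\<bar>)"
proof -
  define D where "D = u1 * v2 - v1 * u2"
  have DD: "D * D = 1" using assms abs_mult_self_eq[of D] by (simp add: D_def)
  \<comment> \<open>Cramer's rule, with 1 / D = D\<close>
  define la where "la = D * (x1 * v2 - v1 * x2)"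
  define lb where "lb = D * (u1 * x2 - x1 * u2)"
  have "la * u1 + lb * v1 = D * D * x1" "la * u2 + lb * v2 = D * D * x2"
    by (simp_all add: la_def lb_def D_def algebra_simps)
  moreover have "\<bar>la\<bar> = \<bar>x1 * v2 - v1 * x2\<bar>" "\<bar>lb\<bar> = \<bar>u1 * x2 - x1 * u2\<bar>"
    using assms by (simp_all add: la_def lb_def D_def abs_mult)
  ultimately show thesis
    using that[of la lb] DD abs_det2_le[of x1 v2 v1 x2] abs_det2_le[of u1 x2 x1 u2] by simp
qed

lemma linear_system_2x2_solvable:
  fixes u1 u2 v1 v2 r s :: real
  assumes "u1 * v2 - v1 * u2 \<noteq> 0"
  obtains w1 w2 where "u1 * w1 + u2 * w2 = r" "v1 * w1 + v2 * w2 = s"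
proof -
  define D where "D = u1 * v2 - v1 * u2"
  have "D \<noteq> 0" using assms by (simp add: D_def)
  then have "u1 * ((r * v2 - s * u2) / D) + u2 * ((u1 * s - v1 * r) / D) = r"
    "v1 * ((r * v2 - s * u2) / D) + v2 * ((u1 * s - v1 * r) / D) = s"
    by (simp_all add: field_simps) (simp_all add: D_def algebra_simps)
  then show thesis by (rule that)
qed

text \<open>The relation b_j = la b_a + lb b_b + (1 - la - lb) b_i as an element of L.\<close>

definition relation_vector :: "nat \<Rightarrow> nat \<Rightarrow> nat \<Rightarrow> nat \<Rightarrow> int \<Rightarrow> int \<Rightarrow> nat \<Rightarrow> int" where
  "relation_vector i a b j la lb x =
     of_bool (x = j) - la * of_bool (x = a) - lb * of_bool (x = b) + (la + lb - 1) * of_bool (x = i)"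

lemma sum_relation_vector:
  fixes g :: "nat \<Rightarrow> 'a::comm_ring_1"
  assumes "finite V" "{i, a, b, j} \<subseteq> V"
  shows "(\<Sum>x\<in>V. of_int (relation_vector i a b j la lb x) * g x)
           = g j - of_int la * g a - of_int lb * g b + of_int (la + lb - 1) * g i"
proof -
  have delta: "(\<Sum>x\<in>V. of_int (e * of_bool (x = y)) * g x) = of_int e * g y" if "y \<in> V" for e y
  proof -
    have "of_int (e * of_bool (x = y)) * g x = (if x = y then of_int e * g y else 0)" for x
      by simp
    then show ?thesis using assms(1) that by simp
  qed
  have "(\<Sum>x\<in>V. of_int (relation_vector i a b j la lb x) * g x)
          = (\<Sum>x\<in>V. of_int (1 * of_bool (x = j)) * g x + of_int ((- la) * of_bool (x = a)) * g x
                     + of_int ((- lb) * of_bool (x = b)) * g x + of_int ((la + lb - 1) * of_bool (x = i)) * g x)"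
    by (intro sum.cong) (simp_all add: relation_vector_def algebra_simps)
  also have "\<dots> = g j - of_int la * g a - of_int lb * g b + of_int (la + lb - 1) * g i"
    using assms(2) by (simp only: sum.distrib insert_subset delta) simp
  finally show ?thesis .
qed

lemma relation_vector_in_lattice_L:
  assumes "{i, a, b, j} \<subseteq> {1..N}"
    and "m j - m i = la * (m a - m i) + lb * (m b - m i)"
    and "n j - n i = la * (n a - n i) + lb * (n b - n i)"
  shows "relation_vector i a b j la lb \<in> lattice_L m n N"
  using sum_relation_vector[OF _ assms(1), where g = m and la = la and lb = lb]
    sum_relation_vector[OF _ assms(1), where g = n and la = la and lb = lb]
    sum_relation_vector[OF _ assms(1), where g = "\<lambda>_. 1 :: int" and la = la and lb = lb] assms
  by (auto simp: lattice_L_def relation_vector_def algebra_simps)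

section \<open>Heights of the coefficients of the mirror curve\<close>

lemma det_sq_zero_column:
  assumes "c < d" "\<And>r. r < d \<Longrightarrow> M r c = 0"
  shows "det_sq d M = 0"
  unfolding det_sq_def
proof (intro sum.neutral ballI)
  fix \<pi> assume "\<pi> \<in> {\<pi>. \<pi> permutes {0..<d}}"
  then have "\<pi> ` {0..<d} = {0..<d}" by (simp add: permutes_image)
  then obtain r where "r < d" "\<pi> r = c" using assms(1) by (metis atLeastLessThan_iff imageE zero_le)
  then have "(\<Prod>i<d. M i (\<pi> i)) = 0" using assms(2) by (intro prod_zero) auto
  then show "of_int (sign \<pi>) * (\<Prod>i<d. M i (\<pi> i)) = 0" by simp
qed

lemma s_matrix_column_nonzero:
  assumes "\<sigma> \<subseteq> {1..p+3}" "card \<sigma> = 3" "j \<in> {1..p+3} - \<sigma>"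
    and "det_sq p (s_matrix p s \<sigma>) \<noteq> 0"
  obtains k where "k \<in> {1..p}" "s \<sigma> k j \<noteq> 0"
proof -
  define cols where "cols = sorted_list_of_set ({1..p+3} - \<sigma>)"
  have "finite \<sigma>" using assms(2) card.infinite by fastforce
  then have "length cols = p" using assms(1,2) by (simp add: cols_def card_Diff_subset)
  moreover have "j \<in> set cols" using assms(3) by (simp add: cols_def)
  ultimately obtain c where c: "c < p" "cols ! c = j" by (auto simp: in_set_conv_nth)
  have "\<exists>r<p. s_matrix p s \<sigma> r c \<noteq> 0"
    using det_sq_zero_column[of c p "s_matrix p s \<sigma>"] c(1) assms(4) by blast
  then obtain r where "r < p" "s \<sigma> (r + 1) j \<noteq> 0"
    using c(2) by (auto simp: s_matrix_def cols_def)
  then show thesis using that[of "r + 1"] by simp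
qed

definition mirror_coeff :: "nat \<Rightarrow> (nat \<Rightarrow> nat \<Rightarrow> nat) \<Rightarrow> (nat \<Rightarrow> complex) \<Rightarrow> nat \<Rightarrow> complex" where
  "mirror_coeff p s1 q i = (if i \<le> 3 then 1 else (\<Prod>k=1..p. q k ^ s1 k i))"

lemma mirror_H_eq_laurent_poly:
  "mirror_H p m n s1 q = laurent_poly {1..p+3} (mirror_coeff p s1 q) m n"
  by (intro ext) (simp add: mirror_H_def laurent_poly_def mirror_coeff_def)

locale mirror_curve_data =
  fixes p :: nat and m n :: "nat \<Rightarrow> int" and T :: "nat set set"
    and s :: "nat set \<Rightarrow> nat \<Rightarrow> nat \<Rightarrow> nat" and Hc :: "nat \<Rightarrow> (nat \<Rightarrow> int) \<Rightarrow> rat"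
  assumes triang: "unimodular_triangulation m n {1..p+3} T"
    and sigma1: "{1, 2, 3} \<in> T"
    and H_expansion: "\<forall>\<sigma>\<in>T. \<forall>k\<in>{1..p}. \<forall>l\<in>lattice_L m n (p+3).
                        Hc k l = (\<Sum>j\<in>{1..p+3} - \<sigma>. of_nat (s \<sigma> k j) * of_int (l j))"
    and nondegenerate: "\<forall>\<sigma>\<in>T. det_sq p (s_matrix p s \<sigma>) \<noteq> 0"
begin

lemma triangle_subset: "\<sigma> \<in> T \<Longrightarrow> \<sigma> \<subseteq> {1..p+3}"
  and triangle_unimodular: "\<sigma> \<in> T \<Longrightarrow> unimodular_triangle m n \<sigma>"
  using triang by (auto simp: unimodular_triangulation_def)

text \<open>Both sides are H_k evaluated on the relation vector, in the chambers {i, a, b} and {1, 2, 3}.\<close>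

lemma s_eq_sum_relation_vector:
  assumes \<sigma>: "{i, a, b} \<in> T" and j: "j \<in> {1..p+3} - {i, a, b}" and k: "k \<in> {1..p}"
    and coords: "m j - m i = la * (m a - m i) + lb * (m b - m i)"
      "n j - n i = la * (n a - n i) + lb * (n b - n i)"
  shows "int (s {i, a, b} k j)
           = (\<Sum>x\<in>{1..p+3} - {1, 2, 3}. int (s {1, 2, 3} k x) * relation_vector i a b j la lb x)"
proof -
  let ?l = "relation_vector i a b j la lb"
  have "{i, a, b, j} \<subseteq> {1..p+3}" using triangle_subset[OF \<sigma>] j by auto
  then have l: "?l \<in> lattice_L m n (p+3)" by (rule relation_vector_in_lattice_L[OF _ coords])
  have Hc_\<sigma>: "Hc k ?l = (\<Sum>x\<in>{1..p+3} - {i, a, b}. of_nat (s {i, a, b} k x) * of_int (?l x))"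
    and Hc_\<sigma>1: "Hc k ?l = (\<Sum>x\<in>{1..p+3} - {1, 2, 3}. of_nat (s {1, 2, 3} k x) * of_int (?l x))"
    using H_expansion[rule_format, OF \<sigma> k l] H_expansion[rule_format, OF sigma1 k l] by simp_all
  have "(of_nat (s {i, a, b} k j) :: rat)
          = (\<Sum>x\<in>{1..p+3} - {i, a, b}. if x = j then of_nat (s {i, a, b} k j) else 0)"
    using j by simp
  \<comment> \<open>off the triangle the relation vector is the unit vector at j\<close>
  also have "\<dots> = (\<Sum>x\<in>{1..p+3} - {i, a, b}. of_nat (s {i, a, b} k x) * of_int (?l x))"
  proof (intro sum.cong refl)
    fix x assume "x \<in> {1..p+3} - {i, a, b}"
    then have "?l x = of_bool (x = j)" by (simp add: relation_vector_def)
    then show "(if x = j then of_nat (s {i, a, b} k j) else 0) = of_nat (s {i, a, b} k x) * (of_int (?l x) :: rat)"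
      by simp
  qed
  finally have "(of_int (int (s {i, a, b} k j)) :: rat)
                  = of_int (\<Sum>x\<in>{1..p+3} - {1, 2, 3}. int (s {1, 2, 3} k x) * ?l x)"
    using Hc_\<sigma> Hc_\<sigma>1 by simp
  then show ?thesis by (simp only: of_int_eq_iff)
qed

definition height :: "(nat \<Rightarrow> real) \<Rightarrow> nat \<Rightarrow> real" where
  "height t x = (if x \<le> 3 then 0 else (\<Sum>k=1..p. t k * real (s {1, 2, 3} k x)))"

lemma norm_mirror_coeff:
  assumes "\<And>k. k \<in> {1..p} \<Longrightarrow> q k \<noteq> 0"
  shows "cmod (mirror_coeff p (s {1, 2, 3}) q x) = exp (- height (\<lambda>k. - ln (cmod (q k))) x)"
proof (cases "x \<le> 3")
  case False
  have "cmod (mirror_coeff p (s {1, 2, 3}) q x) = (\<Prod>k=1..p. cmod (q k) ^ s {1, 2, 3} k x)"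
    using False by (simp add: mirror_coeff_def prod_norm[symmetric] norm_power)
  also have "\<dots> = (\<Prod>k=1..p. exp (real (s {1, 2, 3} k x) * ln (cmod (q k))))"
    using assms by (intro prod.cong refl) (simp add: exp_of_nat_mult)
  also have "\<dots> = exp (- height (\<lambda>k. - ln (cmod (q k))) x)"
    using False by (simp add: height_def exp_sum sum_negf mult.commute)
  finally show ?thesis .
qed (simp add: mirror_coeff_def height_def)

lemma height_bending_ge:
  assumes \<sigma>: "{i, a, b} \<in> T" and j: "j \<in> {1..p+3} - {i, a, b}"
    and coords: "m j - m i = la * (m a - m i) + lb * (m b - m i)"
      "n j - n i = la * (n a - n i) + lb * (n b - n i)"
    and t: "\<And>k. k \<in> {1..p} \<Longrightarrow> L \<le> t k" and "0 \<le> L"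
  shows "L \<le> height t j - la * height t a - lb * height t b + (la + lb - 1) * height t i"
proof -
  let ?l = "relation_vector i a b j la lb" and ?V = "{1..p+3} - {1, 2, 3}"
  have V: "{i, a, b, j} \<subseteq> {1..p+3}" using triangle_subset[OF \<sigma>] j by auto
  have "height t j - la * height t a - lb * height t b + (la + lb - 1) * height t i
          = (\<Sum>x\<in>{1..p+3}. of_int (?l x) * height t x)"
    using sum_relation_vector[OF _ V, where g = "height t"] by simp
  also have "\<dots> = (\<Sum>x\<in>?V. of_int (?l x) * height t x)"
    by (intro sum.mono_neutral_right) (auto simp: height_def)
  also have "\<dots> = (\<Sum>x\<in>?V. \<Sum>k=1..p. t k * of_int (int (s {1, 2, 3} k x) * ?l x))"
    by (intro sum.cong refl) (auto simp: height_def sum_distrib_left algebra_simps)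
  also have "\<dots> = (\<Sum>k=1..p. t k * of_int (\<Sum>x\<in>?V. int (s {1, 2, 3} k x) * ?l x))"
    by (simp add: sum_distrib_left) (rule sum.swap)
  also have "\<dots> = (\<Sum>k=1..p. t k * real (s {i, a, b} k j))"
  proof (intro sum.cong refl)
    fix k assume "k \<in> {1..p}"
    show "t k * of_int (\<Sum>x\<in>?V. int (s {1, 2, 3} k x) * ?l x) = t k * real (s {i, a, b} k j)"
      unfolding s_eq_sum_relation_vector[OF \<sigma> j \<open>k \<in> {1..p}\<close> coords, symmetric] by simp
  qed
  finally have bending: "height t j - la * height t a - lb * height t b + (la + lb - 1) * height t i
                           = (\<Sum>k=1..p. t k * real (s {i, a, b} k j))" .
  have t_nonneg: "0 \<le> t k" if "k \<in> {1..p}" for k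
    using t[OF that] \<open>0 \<le> L\<close> by linarith
  obtain k0 where k0: "k0 \<in> {1..p}" "s {i, a, b} k0 j \<noteq> 0"
    using s_matrix_column_nonzero[OF triangle_subset[OF \<sigma>]
        unimodular_triangle_card[OF triangle_unimodular[OF \<sigma>]] j] nondegenerate \<sigma> by blast
  have "1 \<le> real (s {i, a, b} k0 j)" using k0(2) by simp
  have "L \<le> t k0" using t[OF k0(1)] .
  also have "\<dots> \<le> t k0 * real (s {i, a, b} k0 j)"
    using mult_left_mono[OF \<open>1 \<le> real _\<close>, of "t k0"] t[OF k0(1)] \<open>0 \<le> L\<close> by simp
  also have "\<dots> \<le> (\<Sum>k=1..p. t k * real (s {i, a, b} k j))"
    using k0(1) t_nonneg by (intro member_le_sum) auto
  finally show ?thesis using bending by simp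
qed

definition coord_bound :: int where
  "coord_bound = (\<Sum>x\<in>{1..p+3}. \<bar>m x\<bar> + \<bar>n x\<bar>)"

lemma coord_diff_bound:
  assumes "x \<in> {1..p+3}" "y \<in> {1..p+3}"
  shows "\<bar>m x - m y\<bar> + \<bar>n x - n y\<bar> \<le> 2 * coord_bound"
proof -
  have "\<bar>m z\<bar> + \<bar>n z\<bar> \<le> coord_bound" if "z \<in> {1..p+3}" for z
    unfolding coord_bound_def using that by (intro member_le_sum) auto
  from this[OF assms(1)] this[OF assms(2)] show ?thesis
    using abs_triangle_ineq4[of "m x" "m y"] abs_triangle_ineq4[of "n x" "n y"] by linarith
qed

lemma coord_bound_nonneg: "0 \<le> coord_bound"
  unfolding coord_bound_def by (intro sum_nonneg) simp

lemma height_gap_off_triangle: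
  assumes \<sigma>: "{i, a, b} \<in> T" and j: "j \<in> {1..p+3} - {i, a, b}"
    and det: "\<bar>(m a - m i) * (n b - n i) - (m b - m i) * (n a - n i)\<bar> = 1"
    and "0 \<le> C" and t: "\<And>k. k \<in> {1..p} \<Longrightarrow> C * (1 + 8 * real_of_int coord_bound ^ 2) \<le> t k"
    and wa: "of_int (m a - m i) * fst w + of_int (n a - n i) * snd w = height t a - height t i - C"
    and wb: "of_int (m b - m i) * fst w + of_int (n b - n i) * snd w = height t b - height t i - C"
  shows "C \<le> height t j - height t i - (of_int (m j - m i) * fst w + of_int (n j - n i) * snd w)"
proof -
  let ?B = coord_bound
  have V: "i \<in> {1..p+3}" "a \<in> {1..p+3}" "b \<in> {1..p+3}" "j \<in> {1..p+3}"
    using triangle_subset[OF \<sigma>] j by auto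
  obtain la lb where coords: "m j - m i = la * (m a - m i) + lb * (m b - m i)"
      "n j - n i = la * (n a - n i) + lb * (n b - n i)"
    and la_le: "\<bar>la\<bar> \<le> (\<bar>m j - m i\<bar> + \<bar>n j - n i\<bar>) * (\<bar>m b - m i\<bar> + \<bar>n b - n i\<bar>)"
    and lb_le: "\<bar>lb\<bar> \<le> (\<bar>m a - m i\<bar> + \<bar>n a - n i\<bar>) * (\<bar>m j - m i\<bar> + \<bar>n j - n i\<bar>)"
    using unimodular_coordinates[OF det] by blast
  have "\<bar>la\<bar> \<le> 2 * ?B * (2 * ?B)"
    using la_le mult_mono[OF coord_diff_bound[OF V(4,1)] coord_diff_bound[OF V(3,1)]] coord_bound_nonneg by simp
  moreover have "\<bar>lb\<bar> \<le> 2 * ?B * (2 * ?B)"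
    using lb_le mult_mono[OF coord_diff_bound[OF V(2,1)] coord_diff_bound[OF V(4,1)]] coord_bound_nonneg by simp
  ultimately have "- (8 * ?B\<^sup>2) \<le> la + lb" by (simp add: power2_eq_square)
  then have "- (8 * real_of_int ?B ^ 2) \<le> real_of_int la + real_of_int lb"
    using of_int_le_iff[of "- (8 * ?B\<^sup>2)" "la + lb", where 'a = real] by simp
  then have "C * (- (8 * real_of_int ?B ^ 2)) \<le> C * (real_of_int la + real_of_int lb)"
    using \<open>0 \<le> C\<close> by (rule mult_left_mono)
  moreover have "C * (1 + 8 * real_of_int ?B ^ 2)
                   \<le> height t j - la * height t a - lb * height t b + (la + lb - 1) * height t i"
    using height_bending_ge[where t = t, OF \<sigma> j coords t] \<open>0 \<le> C\<close> by simp
  moreover have "of_int (m j - m i) * fst w + of_int (n j - n i) * snd w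
                   = la * (height t a - height t i - C) + lb * (height t b - height t i - C)"
  proof -
    have "real_of_int (m j - m i) = la * of_int (m a - m i) + lb * of_int (m b - m i)"
      and "real_of_int (n j - n i) = la * of_int (n a - n i) + lb * of_int (n b - n i)"
      unfolding coords by simp_all
    then show ?thesis unfolding wa[symmetric] wb[symmetric] by (simp only:) (simp add: algebra_simps)
  qed
  ultimately show ?thesis by (simp add: algebra_simps)
qed

lemma exists_point_with_height_gap:
  assumes "0 \<le> C" and t: "\<And>k. k \<in> {1..p} \<Longrightarrow> C * (1 + 8 * real_of_int coord_bound ^ 2) \<le> t k"
    and i: "i \<in> {1..p+3}"
  obtains w where "\<And>j. j \<in> {1..p+3} - {i} \<Longrightarrow>
    C \<le> height t j - height t i - (of_int (m j - m i) * fst w + of_int (n j - n i) * snd w)"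
proof -
  have "i \<in> \<Union>T" using triang i by (simp add: unimodular_triangulation_def)
  then obtain \<sigma> where "\<sigma> \<in> T" "i \<in> \<sigma>" by blast
  then obtain a b where \<sigma>_eq: "\<sigma> = {i, a, b}"
    and det: "\<bar>(m a - m i) * (n b - n i) - (m b - m i) * (n a - n i)\<bar> = 1"
    using unimodular_triangle_at_vertex triangle_unimodular by blast
  with \<open>\<sigma> \<in> T\<close> have \<sigma>: "{i, a, b} \<in> T" by simp
  from det have "real_of_int ((m a - m i) * (n b - n i) - (m b - m i) * (n a - n i)) \<noteq> 0"
    by (simp only: of_int_eq_0_iff)
  then have "real_of_int (m a - m i) * of_int (n b - n i) - of_int (m b - m i) * of_int (n a - n i) \<noteq> 0"
    by simp
  then obtain w1 w2 where
    wa: "of_int (m a - m i) * w1 + of_int (n a - n i) * w2 = height t a - height t i - C" and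
    wb: "of_int (m b - m i) * w1 + of_int (n b - n i) * w2 = height t b - height t i - C"
    by (rule linear_system_2x2_solvable)
  show thesis
  proof (rule that)
    fix j assume j: "j \<in> {1..p+3} - {i}"
    consider "j = a" | "j = b" | "j \<in> {1..p+3} - {i, a, b}" using j by blast
    then show "C \<le> height t j - height t i - (of_int (m j - m i) * fst (w1, w2) + of_int (n j - n i) * snd (w1, w2))"
    proof cases
      case 3
      from height_gap_off_triangle[where t = t and w = "(w1, w2)", OF \<sigma> this det \<open>0 \<le> C\<close> t] wa wb
      show ?thesis by simp
    qed (use wa wb in simp_all)
  qed
qed


lemma exists_dominant_term_for_small_q:
  "\<exists>\<epsilon>>0. \<forall>q. (\<forall>k\<in>{1..p}. q k \<noteq> 0 \<and> cmod (q k) < \<epsilon>) \<longrightarrow>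
     (\<forall>i\<in>{1..p+3}. \<exists>w. dominant_term_at {1..p+3} (mirror_coeff p (s {1, 2, 3}) q) m n i w)"
proof -
  define C where "C = ln (real (p + 3))"
  define L where "L = C * (1 + 8 * real_of_int coord_bound ^ 2)"
  have "0 \<le> C" by (simp add: C_def)
  have "\<exists>w. dominant_term_at {1..p+3} (mirror_coeff p (s {1, 2, 3}) q) m n i w"
    if q: "\<forall>k\<in>{1..p}. q k \<noteq> 0 \<and> cmod (q k) < exp (- L)" and i: "i \<in> {1..p+3}" for q i
  proof -
    define t where "t = (\<lambda>k. - ln (cmod (q k)))"
    have "L \<le> t k" if "k \<in> {1..p}" for k
    proof -
      have "0 < cmod (q k)" "cmod (q k) < exp (- L)" using q that by auto
      then have "ln (cmod (q k)) < - L" using ln_less_cancel_iff[of "cmod (q k)" "exp (- L)"] by simp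
      then show ?thesis by (simp add: t_def)
    qed
    then obtain w where gap: "\<And>j. j \<in> {1..p+3} - {i} \<Longrightarrow>
        C \<le> height t j - height t i - (of_int (m j - m i) * fst w + of_int (n j - n i) * snd w)"
      using exists_point_with_height_gap[OF \<open>0 \<le> C\<close> _ i] unfolding L_def by blast
    have "dominant_term_at {1..p+3} (mirror_coeff p (s {1, 2, 3}) q) m n i w"
    proof (rule dominant_term_at_of_height_gap[where h = "height t", OF _ i])
      show "cmod (mirror_coeff p (s {1, 2, 3}) q j) = exp (- height t j)" for j
        unfolding t_def by (rule norm_mirror_coeff) (use q in auto)
    qed (use gap in \<open>simp_all add: C_def add.commute\<close>)
    then show ?thesis ..
  qed
  then show ?thesis by (intro exI[of _ "exp (- L)"]) auto
qed

end

theorem theorem3p3: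
  fixes p :: nat and m n :: "nat \<Rightarrow> int" and T :: "nat set set"
    and s :: "nat set \<Rightarrow> nat \<Rightarrow> nat \<Rightarrow> nat" and Hc :: "nat \<Rightarrow> (nat \<Rightarrow> int) \<Rightarrow> rat"
  assumes distinct: "inj_on (\<lambda>i. (m i, n i)) {1..p+3}"
    and lattice_pts: "{z :: int \<times> int. (real_of_int (fst z), real_of_int (snd z))
                          \<in> convex hull (lpt m n ` {1..p+3})} = (\<lambda>i. (m i, n i)) ` {1..p+3}"
    and b1: "m 1 = 1 \<and> n 1 = 0" and b2: "m 2 = 0 \<and> n 2 = 1" and b3: "m 3 = 0 \<and> n 3 = 0"
    and triang: "unimodular_triangulation m n {1..p+3} T"
    and sigma1: "{1, 2, 3} \<in> T"
    and H_expansion: "\<forall>\<sigma>\<in>T. \<forall>k\<in>{1..p}. \<forall>l\<in>lattice_L m n (p+3).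
                        Hc k l = (\<Sum>j\<in>{1..p+3} - \<sigma>. of_nat (s \<sigma> k j) * of_int (l j))"
    and nondegenerate: "\<forall>\<sigma>\<in>T. det_sq p (s_matrix p s \<sigma>) \<noteq> 0"
  shows "\<exists>\<epsilon>>0. \<forall>q :: nat \<Rightarrow> complex. (\<forall>k\<in>{1..p}. q k \<noteq> 0 \<and> cmod (q k) < \<epsilon>) \<longrightarrow>
           (\<forall>z :: int \<times> int. (real_of_int (fst z), real_of_int (snd z))
                                \<in> convex hull (lpt m n ` {1..p+3}) \<longrightarrow>
              (\<exists>w. w \<notin> amoeba (mirror_H p m n (s {1, 2, 3}) q) \<and>
                   order (mirror_H p m n (s {1, 2, 3}) q) w
                     = (of_int (fst z), of_int (snd z))))"
proof -
  interpret mirror_curve_data p m n T s Hc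
    using triang sigma1 H_expansion nondegenerate by unfold_locales
  obtain \<epsilon> :: real where "\<epsilon> > 0" and dominant: "\<And>q i. \<forall>k\<in>{1..p}. q k \<noteq> 0 \<and> cmod (q k) < \<epsilon> \<Longrightarrow>
      i \<in> {1..p+3} \<Longrightarrow> \<exists>w. dominant_term_at {1..p+3} (mirror_coeff p (s {1, 2, 3}) q) m n i w"
    using exists_dominant_term_for_small_q by blast
  show ?thesis
  proof (intro exI[of _ \<epsilon>] conjI allI impI)
    fix q :: "nat \<Rightarrow> complex" and z :: "int \<times> int"
    assume q: "\<forall>k\<in>{1..p}. q k \<noteq> 0 \<and> cmod (q k) < \<epsilon>"
      and z: "(real_of_int (fst z), real_of_int (snd z)) \<in> convex hull (lpt m n ` {1..p+3})"
    obtain i where i: "i \<in> {1..p+3}" and z_eq: "z = (m i, n i)"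
      using z lattice_pts by blast
    obtain w where "dominant_term_at {1..p+3} (mirror_coeff p (s {1, 2, 3}) q) m n i w"
      using dominant[OF q i] ..
    from laurent_poly_dominant_term[OF _ i this]
    show "\<exists>w. w \<notin> amoeba (mirror_H p m n (s {1, 2, 3}) q) \<and>
              order (mirror_H p m n (s {1, 2, 3}) q) w = (of_int (fst z), of_int (snd z))"
      unfolding mirror_H_eq_laurent_poly z_eq fst_conv snd_conv by blast
  qed (rule \<open>\<epsilon> > 0\<close>)
qed

end
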